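(* Let $\mathcal A$ be a group and $\mathcal H$ any subgroup. Then there exists a generating system $X$ of $\mathcal A$ of size $d(\mathcal A)$ such that the Schreier graph $\mathrm{Sch}(\mathcal A,\mathcal H,X)$ is vertex-transitive.
   Context: $d(\mathcal A)$ is the number of elements of order $2$ of $\mathcal A$ plus half the number of elements of order at least $3$. A generating system is a multiset of elements generating $\mathcal A$. The Schreier graph $\mathrm{Sch}(\mathcal A,\mathcal H,X)$ has vertices the right cosets $\mathcal Hg$ and, for each coset and each $x$ with $x\in X$ or $x^{-1}\in X$, an edge labeled $x$ from $\mathcal Hg$ to $\mathcal Hgx$ whose inverse is the edge labeled $x^{-1}$ from $\mathcal Hgx$ (loops and multiple edges allowed). Vertex-transitive means transitive on vertices under graph automorphisms (not necessarily label-preserving). *)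

theory Defs
  imports "HOL-Algebra.Algebra" "HOL-Library.Multiset"
begin

definition d_inv :: "('a, 'b) monoid_scheme \<Rightarrow> real" where
  "d_inv G = real (card {x \<in> carrier G. group.ord G x = 2})
             + real (card {x \<in> carrier G. group.ord G x \<ge> 3}) / 2"

definition generating_system :: "('a, 'b) monoid_scheme \<Rightarrow> 'a multiset \<Rightarrow> bool" where
  "generating_system G S \<longleftrightarrow> set_mset S \<subseteq> carrier G \<and> generate G (set_mset S) = carrier G"

text \<open>Graphs with loops and multiple edges, given by a vertex set V, a set of
  (directed) darts D, a source map and a involution rv
  (the inverse edge); the target of a dart d is src (rv d).\<close>
definition graph_aut ::
  "'v set \<Rightarrow> 'e set \<Rightarrow> ('e \<Rightarrow> 'v) \<Rightarrow> ('e \<Rightarrow> 'e) \<Rightarrow> ('v \<Rightarrow> 'v) \<Rightarrow> ('e \<Rightarrow> 'e) \<Rightarrow> bool" where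
  "graph_aut V D src rv \<phi> \<psi> \<longleftrightarrow>
     bij_betw \<phi> V V \<and> bij_betw \<psi> D D \<and>
     (\<forall>e\<in>D. src (\<psi> e) = \<phi> (src e)) \<and> (\<forall>e\<in>D. rv (\<psi> e) = \<psi> (rv e))"

definition vertex_transitive ::
  "'v set \<Rightarrow> 'e set \<Rightarrow> ('e \<Rightarrow> 'v) \<Rightarrow> ('e \<Rightarrow> 'e) \<Rightarrow> bool" where
  "vertex_transitive V D src rv \<longleftrightarrow>
     (\<forall>u\<in>V. \<forall>v\<in>V. \<exists>\<phi> \<psi>. graph_aut V D src rv \<phi> \<psi> \<and> \<phi> u = v)"

text \<open>Darts: (C, x, k, b) where C is a coset, x occurs in S and k < count S x indexes the
  occurrence. If x = x^{-1} there is one dart per occurrence and vertex (b = True,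
  labelled x); otherwise two: b = True labelled x (from C to Cx) and
  b = False labelled x^{-1} (from C to Cx^{-1}). rv gives the inverse edge.\<close>
definition sch_vertices :: "('a, 'b) monoid_scheme \<Rightarrow> 'a set \<Rightarrow> 'a set set" where
  "sch_vertices G H = rcosets\<^bsub>G\<^esub> H"

definition sch_darts ::
  "('a, 'b) monoid_scheme \<Rightarrow> 'a set \<Rightarrow> 'a multiset \<Rightarrow> ('a set \<times> 'a \<times> nat \<times> bool) set" where
  "sch_darts G H S = {(C, x, k, b). C \<in> rcosets\<^bsub>G\<^esub> H \<and> x \<in># S \<and> k < count S x \<and>
                                     (x = inv\<^bsub>G\<^esub> x \<longrightarrow> b)}"

definition sch_src :: "('a set \<times> 'a \<times> nat \<times> bool) \<Rightarrow> 'a set" where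
  "sch_src e = fst e"

definition sch_rev ::
  "('a, 'b) monoid_scheme \<Rightarrow> ('a set \<times> 'a \<times> nat \<times> bool) \<Rightarrow> ('a set \<times> 'a \<times> nat \<times> bool)" where
  "sch_rev G e = (case e of (C, x, k, b) \<Rightarrow>
      if x = inv\<^bsub>G\<^esub> x then (C #>\<^bsub>G\<^esub> x, x, k, True)
      else if b then (C #>\<^bsub>G\<^esub> x, x, k, False)
      else (C #>\<^bsub>G\<^esub> inv\<^bsub>G\<^esub> x, x, k, True))"

definition schreier_vertex_transitive ::
  "('a, 'b) monoid_scheme \<Rightarrow> 'a set \<Rightarrow> 'a multiset \<Rightarrow> bool" where
  "schreier_vertex_transitive G H S \<longleftrightarrow>
     vertex_transitive (sch_vertices G H) (sch_darts G H S) sch_src (sch_rev G)"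

end

theory Submission
  imports Defs
begin

text \<open>Choose one element from each pair {y, y^-1} of non-identity elements. Such a
  transversal R generates G, and as an involution forms a pair on its own, |R| = d(G).
  Relabelling every dart of Sch(G, H, R) by the element it multiplies with identifies this graph
  with the graph having one dart C -> C y for every coset C and every y \<noteq> 1. The latter
  is acted on by right translation: C -> C c on cosets together with y -> c^-1 y c on labels is
  an automorphism, because C y c = (C c)(c^-1 y c), and these translations are transitive on cosets.\<close>

definition inverse_transversal :: "('a, 'b) monoid_scheme \<Rightarrow> 'a set \<Rightarrow> bool" where
  "inverse_transversal G R \<longleftrightarrow> R \<subseteq> carrier G - {\<one>\<^bsub>G\<^esub>} \<and>
     (\<forall>y \<in> carrier G - {\<one>\<^bsub>G\<^esub>}. y \<in> R \<or> inv\<^bsub>G\<^esub> y \<in> R) \<and>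
     (\<forall>y \<in> R. inv\<^bsub>G\<^esub> y \<in> R \<longrightarrow> inv\<^bsub>G\<^esub> y = y)"

context group
begin

lemma ord_eq_2_iff:
  assumes "x \<in> carrier G"
  shows "ord x = 2 \<longleftrightarrow> x \<noteq> \<one> \<and> inv x = x"
proof -
  have "inv x = x \<longleftrightarrow> x [^] (2::nat) = \<one>"
    using assms by (metis inv_equality r_inv numeral_2_eq_2 nat_pow_Suc nat_pow_0 l_one)
  also have "\<dots> \<longleftrightarrow> ord x dvd 2"
    using assms by (rule pow_eq_id)
  also have "\<dots> \<longleftrightarrow> ord x = 1 \<or> ord x = 2"
    using dvd_imp_le[of "ord x" 2] by (auto simp: le_Suc_eq numeral_2_eq_2)
  finally show ?thesis
    using ord_eq_1[OF assms] by auto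
qed

lemma ord_ge_3_iff:
  assumes "finite (carrier G)" "x \<in> carrier G"
  shows "3 \<le> ord x \<longleftrightarrow> x \<noteq> \<one> \<and> inv x \<noteq> x"
  using ord_ge_1[OF assms] ord_eq_1[OF assms(2)] ord_eq_2_iff[OF assms(2)] by auto

lemma inverse_transversal_exists: "\<exists>R. inverse_transversal G R"
proof -
  define pick where "pick y = (SOME z. z \<in> {y, inv y})" for y
  have pick_mem: "pick y \<in> {y, inv y}" for y
    unfolding pick_def by (rule someI[of _ y]) simp
  have pick_inv: "pick (inv y) = pick y" if "y \<in> carrier G" for y
    using that by (simp add: pick_def insert_commute)
  define R where "R = {y \<in> carrier G - {\<one>}. pick y = y}"
  have "y \<in> R \<or> inv y \<in> R" if "y \<in> carrier G - {\<one>}" for y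
    using that pick_mem[of y] pick_inv[of y] by (auto simp: R_def)
  moreover have "inv y = y" if "y \<in> R" "inv y \<in> R" for y
    using that pick_inv[of y] by (auto simp: R_def)
  ultimately have "inverse_transversal G R"
    by (auto simp: inverse_transversal_def R_def)
  then show ?thesis ..
qed

lemma inverse_transversal_inv_mem:
  assumes "inverse_transversal G R" "y \<in> carrier G" "y \<noteq> \<one>" "y \<notin> R"
  shows "inv y \<in> R" "inv y \<noteq> y"
  using assms unfolding inverse_transversal_def by auto

lemma generate_inverse_transversal:
  assumes "inverse_transversal G R"
  shows "generate G R = carrier G"
proof
  show "generate G R \<subseteq> carrier G"
    using assms by (intro generate_incl) (auto simp: inverse_transversal_def)
  show "carrier G \<subseteq> generate G R"
  proof
    fix x assume x: "x \<in> carrier G"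
    consider "x = \<one>" | "x \<in> R" | "inv x \<in> R"
      using assms x unfolding inverse_transversal_def by blast
    then show "x \<in> generate G R"
    proof cases
      case 3
      then have "inv (inv x) \<in> generate G R" by (rule generate.inv)
      then show ?thesis using x by simp
    qed (auto intro: generate.one generate.incl)
  qed
qed

lemma card_inverse_transversal:
  assumes fin: "finite (carrier G)" and R: "inverse_transversal G R"
  shows "2 * card R = 2 * card {x \<in> carrier G. x \<noteq> \<one> \<and> inv x = x}
                       + card {x \<in> carrier G. x \<noteq> \<one> \<and> inv x \<noteq> x}"
proof -
  define I where "I = {x \<in> carrier G. x \<noteq> \<one> \<and> inv x = x}"
  define N where "N = {x \<in> carrier G. x \<noteq> \<one> \<and> inv x \<noteq> x}"
  define RN where "RN = R \<inter> N"
  have R_sub: "R \<subseteq> carrier G - {\<one>}"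
    and R_cover: "\<And>y. y \<in> carrier G - {\<one>} \<Longrightarrow> y \<in> R \<or> inv y \<in> R"
    and R_sym: "\<And>y. y \<in> R \<Longrightarrow> inv y \<in> R \<Longrightarrow> inv y = y"
    using R unfolding inverse_transversal_def by auto
  have fin_sets: "finite I" "finite RN" "finite ((\<lambda>x. inv x) ` RN)"
    using fin R_sub by (auto simp: I_def RN_def intro: finite_subset)
  have "R = I \<union> RN" "I \<inter> RN = {}"
    using R_sub R_cover by (auto simp: I_def N_def RN_def) (metis DiffI singletonD)
  then have card_R: "card R = card I + card RN"
    using fin_sets by (simp add: card_Un_disjoint)
  have "N = RN \<union> (\<lambda>x. inv x) ` RN"
  proof
    show "N \<subseteq> RN \<union> (\<lambda>x. inv x) ` RN"
    proof
      fix x assume x: "x \<in> N"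
      then have "inv x \<in> N" "x = inv (inv x)" by (auto simp: N_def)
      moreover have "x \<in> R \<or> inv x \<in> R"
        using R_cover x by (auto simp: N_def)
      ultimately show "x \<in> RN \<union> (\<lambda>x. inv x) ` RN"
        using x unfolding RN_def by (metis IntI UnI1 UnI2 rev_image_eqI)
    qed
    show "RN \<union> (\<lambda>x. inv x) ` RN \<subseteq> N"
      by (auto simp: N_def RN_def)
  qed
  moreover have "RN \<inter> (\<lambda>x. inv x) ` RN = {}"
    using R_sym R_sub by (force simp: N_def RN_def)
  moreover have "card ((\<lambda>x. inv x) ` RN) = card RN"
    using R_sub by (intro card_image inj_on_subset[OF inv_inj]) (auto simp: RN_def)
  ultimately have card_N: "card N = 2 * card RN"
    using fin_sets by (simp add: card_Un_disjoint)
  show ?thesis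
    using card_R card_N unfolding I_def N_def by simp
qed

lemma d_inv_eq_card_inverse_transversal:
  assumes fin: "finite (carrier G)" and R: "inverse_transversal G R"
  shows "d_inv G = real (card R)"
proof -
  have "{x \<in> carrier G. ord x = 2} = {x \<in> carrier G. x \<noteq> \<one> \<and> inv x = x}"
    "{x \<in> carrier G. 3 \<le> ord x} = {x \<in> carrier G. x \<noteq> \<one> \<and> inv x \<noteq> x}"
    using ord_eq_2_iff ord_ge_3_iff[OF fin] by auto
  then show ?thesis
    using card_inverse_transversal[OF assms] unfolding d_inv_def
    by (simp add: field_simps flip: of_nat_add of_nat_mult)
qed

end

lemma graph_aut_transfer:
  assumes f: "bij_betw f D' D"
    and src: "\<forall>e \<in> D'. src (f e) = src' e"
    and rv: "\<forall>e \<in> D'. rv (f e) = f (rv' e)"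
    and rv'_closed: "rv' ` D' \<subseteq> D'"
    and aut: "graph_aut V D' src' rv' \<phi> \<psi>"
  shows "graph_aut V D src rv \<phi> (f \<circ> \<psi> \<circ> inv_into D' f)"
proof -
  let ?g = "inv_into D' f"
  have g: "bij_betw ?g D D'" using f by (rule bij_betw_inv_into)
  have \<psi>: "bij_betw \<psi> D' D'" and \<psi>_src: "\<forall>e \<in> D'. src' (\<psi> e) = \<phi> (src' e)"
    and \<psi>_rv: "\<forall>e \<in> D'. rv' (\<psi> e) = \<psi> (rv' e)"
    using aut by (auto simp: graph_aut_def)
  have "bij_betw (f \<circ> \<psi> \<circ> ?g) D D"
    using bij_betw_trans[OF bij_betw_trans[OF g \<psi>] f] by (simp add: comp_assoc)
  moreover have "src (f (\<psi> (?g e))) = \<phi> (src e)" if "e \<in> D" for e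
  proof -
    have "?g e \<in> D'" "f (?g e) = e" using that g f by (auto simp: bij_betw_inv_into_right bij_betw_apply)
    then show ?thesis using src \<psi>_src bij_betw_apply[OF \<psi>] by metis
  qed
  moreover have "rv (f (\<psi> (?g e))) = f (\<psi> (?g (rv e)))" if "e \<in> D" for e
  proof -
    have e': "?g e \<in> D'" "f (?g e) = e" using that g f by (auto simp: bij_betw_inv_into_right bij_betw_apply)
    then have "rv e = f (rv' (?g e))" using rv by metis
    then have "?g (rv e) = rv' (?g e)" using bij_betw_inv_into_left[OF f] rv'_closed e'(1) by auto
    then show ?thesis using rv \<psi>_rv e'(1) bij_betw_apply[OF \<psi>] by metis
  qed
  ultimately show ?thesis using aut by (simp add: graph_aut_def)
qed

lemma vertex_transitive_transfer:
  assumes "bij_betw f D' D"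
    and "\<forall>e \<in> D'. src (f e) = src' e"
    and "\<forall>e \<in> D'. rv (f e) = f (rv' e)"
    and "rv' ` D' \<subseteq> D'"
    and "vertex_transitive V D' src' rv'"
  shows "vertex_transitive V D src rv"
  using assms graph_aut_transfer[OF assms(1-4)] unfolding vertex_transitive_def by metis

context group
begin

lemma rcoset_mult_closed:
  assumes "subgroup H G" "C \<in> rcosets H" "c \<in> carrier G"
  shows "C #> c \<in> rcosets H"
proof -
  obtain a where a: "a \<in> carrier G" "C = H #> a" using assms(2) unfolding RCOSETS_def by auto
  then have "C #> c = H #> (a \<otimes> c)"
    using coset_mult_assoc subgroup.subset[OF assms(1)] assms(3) by simp
  then show ?thesis using a assms(3) subgroup.subset[OF assms(1)] by (simp add: rcosetsI)
qed

lemma rcoset_mult_inv_cancel: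
  assumes "subgroup H G" "C \<in> rcosets H" "a \<in> carrier G"
  shows "C #> a #> inv a = C" "C #> inv a #> a = C"
  using assms subgroup.rcosets_carrier[OF assms(1) is_group] by (simp_all add: coset_mult_assoc)

lemma rcosets_translation_bij:
  assumes H: "subgroup H G" and c: "c \<in> carrier G"
  shows "bij_betw (\<lambda>C. C #> c) (rcosets H) (rcosets H)"
  by (rule bij_betw_byWitness[where f' = "\<lambda>C. C #> inv c"])
     (use rcoset_mult_inv_cancel[OF H] c H in \<open>auto intro: rcoset_mult_closed\<close>)

lemma rcosets_dart_translation_bij:
  assumes H: "subgroup H G" and c: "c \<in> carrier G"
  shows "bij_betw (\<lambda>(C, y). (C #> c, inv c \<otimes> y \<otimes> c))
           ((rcosets H) \<times> (carrier G - {\<one>})) ((rcosets H) \<times> (carrier G - {\<one>}))"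
proof (rule bij_betw_byWitness[where f' = "\<lambda>(C, y). (C #> inv c, c \<otimes> y \<otimes> inv c)"])
  have conj_back: "c \<otimes> (inv c \<otimes> y \<otimes> c) \<otimes> inv c = y"
    "inv c \<otimes> (c \<otimes> y \<otimes> inv c) \<otimes> c = y" if "y \<in> carrier G" for y
    using that c by (simp_all add: m_assoc flip: m_assoc[of _ _ y])
  have conj_ne_one: "inv c \<otimes> y \<otimes> c \<noteq> \<one>" "c \<otimes> y \<otimes> inv c \<noteq> \<one>"
    if "y \<in> carrier G" "y \<noteq> \<one>" for y
  proof -
    show "inv c \<otimes> y \<otimes> c \<noteq> \<one>"
    proof
      assume "inv c \<otimes> y \<otimes> c = \<one>"
      then have "y = c \<otimes> \<one> \<otimes> inv c" using conj_back(1)[OF that(1)] by simp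
      then show False using that c by simp
    qed
    show "c \<otimes> y \<otimes> inv c \<noteq> \<one>"
    proof
      assume "c \<otimes> y \<otimes> inv c = \<one>"
      then have "y = inv c \<otimes> \<one> \<otimes> c" using conj_back(2)[OF that(1)] by simp
      then show False using that c by simp
    qed
  qed
  show "\<forall>e \<in> (rcosets H) \<times> (carrier G - {\<one>}).
      (\<lambda>(C, y). (C #> inv c, c \<otimes> y \<otimes> inv c)) ((\<lambda>(C, y). (C #> c, inv c \<otimes> y \<otimes> c)) e) = e"
    using rcoset_mult_inv_cancel(1)[OF H] conj_back(1) c by auto
  show "\<forall>e \<in> (rcosets H) \<times> (carrier G - {\<one>}).
      (\<lambda>(C, y). (C #> c, inv c \<otimes> y \<otimes> c)) ((\<lambda>(C, y). (C #> inv c, c \<otimes> y \<otimes> inv c)) e) = e"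
    using rcoset_mult_inv_cancel(2)[OF H] conj_back(2) c by auto
  show "(\<lambda>(C, y). (C #> c, inv c \<otimes> y \<otimes> c)) ` ((rcosets H) \<times> (carrier G - {\<one>}))
      \<subseteq> (rcosets H) \<times> (carrier G - {\<one>})"
    using rcoset_mult_closed[OF H _ c] conj_ne_one(1) c by auto
  show "(\<lambda>(C, y). (C #> inv c, c \<otimes> y \<otimes> inv c)) ` ((rcosets H) \<times> (carrier G - {\<one>}))
      \<subseteq> (rcosets H) \<times> (carrier G - {\<one>})"
    using rcoset_mult_closed[OF H _ inv_closed[OF c]] conj_ne_one(2) c by auto
qed

lemma rcosets_translation_graph_aut:
  assumes H: "subgroup H G" and c: "c \<in> carrier G"
  shows "graph_aut (rcosets H) ((rcosets H) \<times> (carrier G - {\<one>})) fst (\<lambda>(C, y). (C #> y, inv y))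
           (\<lambda>C. C #> c) (\<lambda>(C, y). (C #> c, inv c \<otimes> y \<otimes> c))"
proof -
  have "C #> c #> (inv c \<otimes> y \<otimes> c) = C #> y #> c"
    and "inv (inv c \<otimes> y \<otimes> c) = inv c \<otimes> inv y \<otimes> c"
    if "C \<in> rcosets H" "y \<in> carrier G" for C y
  proof -
    have "c \<otimes> (inv c \<otimes> y \<otimes> c) = y \<otimes> c"
      using that c by (simp flip: m_assoc)
    then show "C #> c #> (inv c \<otimes> y \<otimes> c) = C #> y #> c"
      using that c subgroup.rcosets_carrier[OF H is_group] by (simp add: coset_mult_assoc)
    show "inv (inv c \<otimes> y \<otimes> c) = inv c \<otimes> inv y \<otimes> c"
      using that c by (simp add: m_assoc inv_mult_group)
  qed
  then show ?thesis
    using rcosets_translation_bij[OF H c] rcosets_dart_translation_bij[OF H c]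
    by (auto simp: graph_aut_def)
qed

lemma rcosets_graph_vertex_transitive:
  assumes H: "subgroup H G"
  shows "vertex_transitive (rcosets H) ((rcosets H) \<times> (carrier G - {\<one>})) fst
           (\<lambda>(C, y). (C #> y, inv y))"
  unfolding vertex_transitive_def
proof (intro ballI)
  fix U V assume "U \<in> rcosets H" "V \<in> rcosets H"
  then obtain a b where a: "a \<in> carrier G" "U = H #> a" and b: "b \<in> carrier G" "V = H #> b"
    unfolding RCOSETS_def by auto
  have "U #> (inv a \<otimes> b) = V"
    using a b subgroup.subset[OF H] by (simp add: coset_mult_assoc flip: m_assoc)
  then show "\<exists>\<phi> \<psi>. graph_aut (rcosets H) ((rcosets H) \<times> (carrier G - {\<one>})) fst
      (\<lambda>(C, y). (C #> y, inv y)) \<phi> \<psi> \<and> \<phi> U = V"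
    using rcosets_translation_graph_aut[OF H, of "inv a \<otimes> b"] a b by auto
qed

end

text \<open>The dart of Sch(G, H, R) that leaves C with label y; for y \<notin> R this is the dart
  of the generator y^-1 \<in> R traversed backwards.\<close>
definition transversal_dart ::
  "('a, 'b) monoid_scheme \<Rightarrow> 'a set \<Rightarrow> 'a set \<times> 'a \<Rightarrow> 'a set \<times> 'a \<times> nat \<times> bool" where
  "transversal_dart G R = (\<lambda>(C, y). if y \<in> R then (C, y, 0, True) else (C, inv\<^bsub>G\<^esub> y, 0, False))"

context group
begin

lemma bij_betw_transversal_dart:
  assumes R: "inverse_transversal G R" "finite R"
  shows "bij_betw (transversal_dart G R) ((rcosets H) \<times> (carrier G - {\<one>}))
           (sch_darts G H (mset_set R))"
proof (rule bij_betw_byWitness[where f' = "\<lambda>(C, x, k, b). (C, if b then x else inv x)"])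
  have R_sub: "R \<subseteq> carrier G - {\<one>}" using R(1) by (simp add: inverse_transversal_def)
  show "\<forall>e \<in> (rcosets H) \<times> (carrier G - {\<one>}).
      (\<lambda>(C, x, k, b). (C, if b then x else inv x)) (transversal_dart G R e) = e"
    by (auto simp: transversal_dart_def)
  show "\<forall>e \<in> sch_darts G H (mset_set R).
      transversal_dart G R ((\<lambda>(C, x, k, b). (C, if b then x else inv x)) e) = e"
    using R R_sub by (auto simp: transversal_dart_def sch_darts_def inverse_transversal_def count_mset_set)
  show "transversal_dart G R ` ((rcosets H) \<times> (carrier G - {\<one>})) \<subseteq> sch_darts G H (mset_set R)"
    using R inverse_transversal_inv_mem[OF R(1)]
    by (auto simp: transversal_dart_def sch_darts_def count_mset_set split: if_splits)
  show "(\<lambda>(C, x, k, b). (C, if b then x else inv x)) ` sch_darts G H (mset_set R)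
      \<subseteq> (rcosets H) \<times> (carrier G - {\<one>})"
    using R R_sub by (force simp: sch_darts_def count_mset_set)
qed

lemma sch_rev_transversal_dart:
  assumes R: "inverse_transversal G R" and y: "y \<in> carrier G" "y \<noteq> \<one>"
  shows "sch_rev G (transversal_dart G R (C, y)) = transversal_dart G R (C #> y, inv y)"
proof (cases "y \<in> R")
  case True
  then show ?thesis
    using R y by (auto simp: transversal_dart_def sch_rev_def inverse_transversal_def)
next
  case False
  then show ?thesis
    using inverse_transversal_inv_mem[OF R y False] y by (auto simp: transversal_dart_def sch_rev_def)
qed

lemma schreier_vertex_transitive_inverse_transversal:
  assumes H: "subgroup H G" and R: "inverse_transversal G R" "finite R"
  shows "schreier_vertex_transitive G H (mset_set R)"
  unfolding schreier_vertex_transitive_def sch_vertices_def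
proof (rule vertex_transitive_transfer[OF bij_betw_transversal_dart[OF R]])
  show "\<forall>e \<in> (rcosets H) \<times> (carrier G - {\<one>}). sch_src (transversal_dart G R e) = fst e"
    by (auto simp: sch_src_def transversal_dart_def)
  show "\<forall>e \<in> (rcosets H) \<times> (carrier G - {\<one>}).
      sch_rev G (transversal_dart G R e) = transversal_dart G R ((\<lambda>(C, y). (C #> y, inv y)) e)"
    using sch_rev_transversal_dart[OF R(1)] by auto
  show "(\<lambda>(C, y). (C #> y, inv y)) ` ((rcosets H) \<times> (carrier G - {\<one>}))
      \<subseteq> (rcosets H) \<times> (carrier G - {\<one>})"
    using rcoset_mult_closed[OF H] by auto
qed (rule rcosets_graph_vertex_transitive[OF H])

end

theorem proposition6p1:
  fixes G :: "('a, 'b) monoid_scheme" and H :: "'a set"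
  assumes "group G" and "finite (carrier G)" and "subgroup H G"
  shows "\<exists>S. generating_system G S \<and> real (size S) = d_inv G \<and>
             schreier_vertex_transitive G H S"
proof -
  interpret group G by fact
  obtain R where R: "inverse_transversal G R"
    using inverse_transversal_exists ..
  then have "finite R"
    using assms(2) finite_subset by (auto simp: inverse_transversal_def)
  then have "generating_system G (mset_set R)"
    using R generate_inverse_transversal by (auto simp: generating_system_def inverse_transversal_def)
  moreover have "real (size (mset_set R)) = d_inv G"
    using d_inv_eq_card_inverse_transversal[OF assms(2) R] by simp
  moreover have "schreier_vertex_transitive G H (mset_set R)"
    using schreier_vertex_transitive_inverse_transversal[OF assms(3) R \<open>finite R\<close>] .
  ultimately show ?thesis by blast
qed

end
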